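(* For every composite positive integer $n$ the following are equivalent: (i) $n$ is a Gaussian Carmichael number; (ii) $\Lambda(n)$ divides $\mathcal{F}(n)$; (iii) for every prime divisor $p$ of $n$, $\mathcal{F}(p)$ divides $\mathcal{F}(n)$, and one of the following holds: (a) $n$ is odd and square-free; (b) $4\mid n$ and $n/4\in\{2,3,5\}$ or $n/4$ is not a prime.
   Context: For a positive integer $n$, $\mathcal{G}_n=\{a+bi\in\mathbb{Z}[i]/n\mathbb{Z}[i] : a^2+b^2\equiv 1\pmod n\}$ (a multiplicative group), and $\Lambda(n)$ is the exponent of $\mathcal{G}_n$. The function $\mathcal{F}$ is defined by $\mathcal{F}(n)=n-1$ if $n\equiv 1\pmod 4$, $\mathcal{F}(n)=n+1$ if $n\equiv 3 \pmod 4$, $\mathcal{F}(n)=n$ otherwise. A composite integer $n$ is a Gaussian Fermat pseudoprime to base $z\in\mathbb{Z}[i]$ if $\gcd(n,z\overline{z})=1$ and $(z/\overline{z})^{\mathcal{F}(n)}\equiv 1\pmod n$ in $\mathbb{Z}[i]/n\mathbb{Z}[i]$. A composite $n$ is a Gaussian Carmichael number if it is a Gaussian Fermat pseudoprime to base $z$ for every $z\in\mathbb{Z}[i]$ with $\gcd(n,z\overline{z})=1$. *)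

theory Defs
  imports "HOL-Number_Theory.Number_Theory" "HOL-Computational_Algebra.Squarefree"
begin

text \<open>Gaussian integers a + b i are represented as pairs (a, b) of integers.\<close>

type_synonym gint = "int \<times> int"

definition gmult :: "gint \<Rightarrow> gint \<Rightarrow> gint" where
  "gmult z w = (fst z * fst w - snd z * snd w, fst z * snd w + snd z * fst w)"

definition gconj :: "gint \<Rightarrow> gint" where
  "gconj z = (fst z, - snd z)"

definition gnorm :: "gint \<Rightarrow> int" where
  "gnorm z = fst z ^ 2 + snd z ^ 2"

fun gpow :: "gint \<Rightarrow> nat \<Rightarrow> gint" where
  "gpow z 0 = (1, 0)"
| "gpow z (Suc k) = gmult z (gpow z k)"

definition gcong :: "nat \<Rightarrow> gint \<Rightarrow> gint \<Rightarrow> bool" where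
  "gcong n z w \<longleftrightarrow> [fst z = fst w] (mod int n) \<and> [snd z = snd w] (mod int n)"

text \<open>A chosen inverse of u in Z[i]/nZ[i] (meaningful when u is a unit mod n).\<close>
definition ginv :: "nat \<Rightarrow> gint \<Rightarrow> gint" where
  "ginv n u = (SOME v. gcong n (gmult v u) (1, 0))"

definition Gn :: "nat \<Rightarrow> gint set" where
  "Gn n = {z. fst z \<in> {0..<int n} \<and> snd z \<in> {0..<int n} \<and> [gnorm z = 1] (mod int n)}"

definition Lambda :: "nat \<Rightarrow> nat" where
  "Lambda n = (LEAST k. 0 < k \<and> (\<forall>x \<in> Gn n. gcong n (gpow x k) (1, 0)))"

definition FF :: "nat \<Rightarrow> nat" where
  "FF n = (if n mod 4 = 1 then n - 1 else if n mod 4 = 3 then n + 1 else n)"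

definition composite :: "nat \<Rightarrow> bool" where
  "composite n \<longleftrightarrow> 1 < n \<and> \<not> prime n"

definition gauss_fermat_psp :: "nat \<Rightarrow> gint \<Rightarrow> bool" where
  "gauss_fermat_psp n z \<longleftrightarrow> composite n \<and> coprime (int n) (gnorm z) \<and>
     gcong n (gpow (gmult z (ginv n (gconj z))) (FF n)) (1, 0)"

definition gauss_carmichael :: "nat \<Rightarrow> bool" where
  "gauss_carmichael n \<longleftrightarrow> composite n \<and>
     (\<forall>z. coprime (int n) (gnorm z) \<longrightarrow> gauss_fermat_psp n z)"

end

theory Submission
  imports Defs
begin

text \<open>
  By the Frobenius congruence z^p \<equiv> z or z^p \<equiv> gconj z (mod p), according as p \<equiv> 1 or 3 (mod 4),
  every z of norm 1 mod an odd prime p satisfies z^FF(p) \<equiv> 1, and lifting to p^e multiplies the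
  exponent by p^(e-1). Hence \<Lambda>(n) divides FF(n) as soon as FF(p) p^(e-1) divides FF(n) for all
  p^e \<parallel> n, which is what (iii) guarantees; and (ii) gives (i) because z / gconj z has norm 1.

  Conversely, a Gaussian Carmichael number satisfies z^FF(n) \<equiv> (gconj z)^FF(n) for all units z,
  hence modulo every prime p | n. For p \<equiv> 1 (mod 4), evaluating i at a square root c of -1
  turns this into g^FF(n) \<equiv> 1 for a primitive root g; for p \<equiv> 3 (mod 4), Z[i]/p is the field
  with p^2 elements and a generator a with a^p \<equiv> gconj a gives a^((p-1) FF(n)) \<equiv> 1. Either way
  FF(p) | FF(n). If p^2 | n with n odd, the unit 1 + (n/p) i violates the congruence; for even n,
  odd prime factors force 4 | n, and n = 4q with q prime forces FF(q) | 4, so q \<le> 5.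
\<close>

section \<open>Arithmetic of Gaussian integers modulo n\<close>

lemma gmult_commute: "gmult z w = gmult w z"
  by (simp add: gmult_def algebra_simps)

lemma gmult_assoc: "gmult (gmult z w) u = gmult z (gmult w u)"
  by (simp add: gmult_def algebra_simps)

lemma gmult_left_commute: "gmult z (gmult w u) = gmult w (gmult z u)"
  by (metis gmult_assoc gmult_commute)

lemma gmult_one [simp]: "gmult (1, 0) z = z" "gmult z (1, 0) = z"
  by (simp_all add: gmult_def)

lemma gpow_add: "gpow z (a + b) = gmult (gpow z a) (gpow z b)"
  by (induction a) (simp_all add: gmult_assoc)

lemma gpow_mult: "gpow z (a * b) = gpow (gpow z a) b"
  by (induction b) (simp_all add: gpow_add gmult_commute)

lemma gpow_gmult: "gpow (gmult z w) k = gmult (gpow z k) (gpow w k)"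
  by (induction k) (simp_all add: gmult_assoc gmult_left_commute)

lemma gpow_one [simp]: "gpow (1, 0) k = (1, 0)"
  by (induction k) simp_all

lemma gnorm_gmult: "gnorm (gmult z w) = gnorm z * gnorm w"
  by (simp add: gmult_def gnorm_def power2_eq_square algebra_simps)

lemma gnorm_gconj [simp]: "gnorm (gconj z) = gnorm z"
  by (simp add: gconj_def gnorm_def)

lemma gnorm_one [simp]: "gnorm (1, 0) = 1"
  by (simp add: gnorm_def)

lemma gnorm_gpow: "gnorm (gpow z k) = gnorm z ^ k"
  by (induction k) (simp_all add: gnorm_gmult)

lemma gmult_gconj_self: "gmult z (gconj z) = (gnorm z, 0)"
  by (simp add: gmult_def gconj_def gnorm_def power2_eq_square)

lemma gcong_refl [simp]: "gcong n z z"
  by (simp add: gcong_def)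

lemma gcong_sym: "gcong n z w \<Longrightarrow> gcong n w z"
  by (simp add: gcong_def cong_sym)

lemma gcong_trans [trans]: "gcong n z w \<Longrightarrow> gcong n w u \<Longrightarrow> gcong n z u"
  unfolding gcong_def using cong_trans by blast

lemma gcong_gmult: "gcong n z w \<Longrightarrow> gcong n z' w' \<Longrightarrow> gcong n (gmult z z') (gmult w w')"
  unfolding gcong_def gmult_def by (auto intro: cong_add cong_diff cong_mult)

lemma gcong_gpow: "gcong n z w \<Longrightarrow> gcong n (gpow z k) (gpow w k)"
  by (induction k) (simp_all add: gcong_gmult)

lemma gcong_gconj: "gcong n z w \<Longrightarrow> gcong n (gconj z) (gconj w)"
  unfolding gcong_def gconj_def by (auto intro: cong_minus_minus_iff[THEN iffD2])

lemma gcong_gnorm: "gcong n z w \<Longrightarrow> [gnorm z = gnorm w] (mod int n)"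
  unfolding gcong_def gnorm_def by (auto intro: cong_add cong_pow)

lemma gcong_dvd_modulus: "gcong n z w \<Longrightarrow> m dvd n \<Longrightarrow> gcong m z w"
  unfolding gcong_def using cong_dvd_modulus int_dvd_int_iff by blast

lemma gcong_of_int_iff: "gcong n (a, 0) (b, 0) \<longleftrightarrow> [a = b] (mod int n)"
  by (simp add: gcong_def)

lemma gpow_eq_one_dvd:
  assumes "gcong n (gpow z a) (1, 0)" and "a dvd b"
  shows "gcong n (gpow z b) (1, 0)"
proof -
  obtain c where "b = a * c" using assms(2) ..
  then show ?thesis using gcong_gpow[OF assms(1), of c] by (simp add: gpow_mult)
qed

lemma gmult_ginv:
  assumes "coprime (int n) (gnorm u)"
  shows "gcong n (gmult (ginv n u) u) (1, 0)"
proof -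
  have "coprime (gnorm u) (int n)"
    using assms by (simp add: coprime_commute)
  then obtain M where M: "[gnorm u * M = 1] (mod int n)"
    using cong_solve_coprime_int by blast
  have "gmult (gmult (M, 0) (gconj u)) u = (gnorm u * M, 0)"
    by (simp add: gmult_def gconj_def gnorm_def power2_eq_square algebra_simps)
  with M have "gcong n (gmult (gmult (M, 0) (gconj u)) u) (1, 0)"
    by (simp add: gcong_of_int_iff)
  then have "\<exists>v. gcong n (gmult v u) (1, 0)"
    by blast
  then show ?thesis
    unfolding ginv_def by (rule someI_ex)
qed

lemma gcong_cancel_left:
  assumes "coprime (int n) (gnorm u)" and "gcong n (gmult u z) (gmult u w)"
  shows "gcong n z w"
proof -
  have "gcong n z (gmult (gmult (ginv n u) u) z)"
    using gcong_gmult[OF gmult_ginv[OF assms(1)] gcong_refl, of z] by (simp add: gcong_sym)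
  also have "gcong n \<dots> (gmult (gmult (ginv n u) u) w)"
    using gcong_gmult[OF gcong_refl assms(2), of "ginv n u"] by (simp add: gmult_assoc)
  also have "gcong n \<dots> w"
    using gcong_gmult[OF gmult_ginv[OF assms(1)] gcong_refl, of w] by simp
  finally show ?thesis .
qed

section \<open>The Frobenius congruence and the exponent of G_p\<close>

lemma odd_prime_gt_2: "prime p \<Longrightarrow> odd p \<Longrightarrow> p > (2 :: nat)"
  using prime_ge_2_nat[of p] by (cases "p = 2") auto

lemma odd_prime_not_dvd_two: "prime p \<Longrightarrow> odd p \<Longrightarrow> \<not> int p dvd 2"
  using odd_prime_gt_2[of p] zdvd_imp_le[of "int p" 2] by auto

lemma prime_even_imp_two: "prime p \<Longrightarrow> even p \<Longrightarrow> p = (2 :: nat)"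
  using prime_ge_2_nat[of p] prime_odd_nat[of p] by fastforce

lemma fermat_little_nat:
  fixes m :: nat
  assumes "prime p"
  shows "[m ^ p = m] (mod p)"
proof (cases "p dvd m")
  case True
  then have "p dvd m ^ p"
    using prime_gt_0_nat[OF assms] dvd_trans dvd_power by blast
  with True show ?thesis
    by (simp add: cong_def dvd_eq_mod_eq_0)
next
  case False
  then have "[m ^ (p - 1) * m = 1 * m] (mod p)"
    using fermat_theorem[OF assms] cong_scalar_right by blast
  moreover have "m ^ (p - 1) * m = m ^ p"
    using prime_gt_0_nat[OF assms] by (rule power_minus_mult)
  ultimately show ?thesis
    by simp
qed

lemma fermat_little_int:
  fixes a :: int
  assumes "prime p"
  shows "[a ^ p = a] (mod int p)"
proof -
  define m where "m = nat (a mod int p)"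
  have a_m: "[a = int m] (mod int p)"
    using prime_gt_0_nat[OF assms] by (simp add: m_def cong_def)
  then have "[a ^ p = int m ^ p] (mod int p)"
    by (rule cong_pow)
  also have "[int m ^ p = int m] (mod int p)"
    using fermat_little_nat[OF assms, of m] cong_int_iff[of "m ^ p" m p] by simp
  also have "[int m = a] (mod int p)"
    using a_m by (rule cong_sym)
  finally show ?thesis .
qed

lemma i_power_odd:
  assumes "odd p"
  shows "\<i> ^ p = (if p mod 4 = 1 then \<i> else - \<i>)"
proof -
  obtain q where q: "p = 2 * q + 1"
    using assms oddE by blast
  then have "\<i> ^ p = (- 1) ^ q * \<i>"
    by (simp add: power_add power_mult)
  moreover have "p mod 4 = 1 \<longleftrightarrow> even q"
    using q by presburger
  ultimately show ?thesis
    by (auto simp: minus_one_power_iff)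
qed

text \<open>The Gaussian integers are embedded in \<open>\<complex>\<close> in order to use the binomial theorem there.\<close>

definition gcomplex :: "gint \<Rightarrow> complex" where
  "gcomplex z = of_int (fst z) + \<i> * of_int (snd z)"

lemma Re_gcomplex [simp]: "Re (gcomplex z) = of_int (fst z)"
  and Im_gcomplex [simp]: "Im (gcomplex z) = of_int (snd z)"
  by (simp_all add: gcomplex_def)

lemma gcomplex_of_int: "gcomplex (a, 0) = of_int a"
  by (simp add: gcomplex_def)

lemma gcomplex_gmult: "gcomplex (gmult z w) = gcomplex z * gcomplex w"
  by (simp add: complex_eq_iff gmult_def)

lemma gcomplex_gpow: "gcomplex (gpow z k) = gcomplex z ^ k"
  by (induction k) (simp_all add: gcomplex_gmult complex_eq_iff)

definition gmultiples :: "nat \<Rightarrow> complex set" where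
  "gmultiples n = range (\<lambda>u. of_nat n * gcomplex u)"

lemma gmultiples_zero: "0 \<in> gmultiples n"
  unfolding gmultiples_def by (rule range_eqI[of _ _ "(0, 0)"]) (simp add: gcomplex_def)

lemma gmultiples_add:
  assumes "x \<in> gmultiples n" and "y \<in> gmultiples n"
  shows "x + y \<in> gmultiples n"
proof -
  obtain u v where "x = of_nat n * gcomplex u" and "y = of_nat n * gcomplex v"
    using assms by (auto simp: gmultiples_def)
  then have "x + y = of_nat n * gcomplex (fst u + fst v, snd u + snd v)"
    by (simp add: complex_eq_iff algebra_simps)
  then show ?thesis
    unfolding gmultiples_def by (rule range_eqI)
qed

lemma gmultiples_sum:
  "finite A \<Longrightarrow> (\<And>k. k \<in> A \<Longrightarrow> f k \<in> gmultiples n) \<Longrightarrow> sum f A \<in> gmultiples n"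
  by (induction A rule: finite_induct) (simp_all add: gmultiples_zero gmultiples_add)

lemma gmultiples_mult: "x \<in> gmultiples n \<Longrightarrow> x * gcomplex w \<in> gmultiples n"
  by (auto simp: gmultiples_def mult.assoc gcomplex_gmult[symmetric])

lemma gcong_if_gcomplex_diff:
  assumes "gcomplex z - gcomplex w \<in> gmultiples n"
  shows "gcong n z w"
proof -
  obtain u where u: "gcomplex z - gcomplex w = of_nat n * gcomplex u"
    using assms by (auto simp: gmultiples_def)
  have "real_of_int (fst z - fst w) = real_of_int (int n * fst u)"
    and "real_of_int (snd z - snd w) = real_of_int (int n * snd u)"
    using arg_cong[OF u, of Re] arg_cong[OF u, of Im] by simp_all
  then show ?thesis
    unfolding gcong_def of_int_eq_iff by (simp add: cong_iff_dvd_diff)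
qed

lemma gcomplex_add_pow_prime:
  assumes "prime p"
  shows "(gcomplex x + gcomplex y) ^ p - (gcomplex x ^ p + gcomplex y ^ p) \<in> gmultiples p"
proof -
  define A B where "A = gcomplex x" and "B = gcomplex y"
  have p: "p \<ge> 1"
    using prime_ge_1_nat[OF assms] .
  have "(A + B) ^ p = (\<Sum>k\<le>p. of_nat (p choose k) * A ^ k * B ^ (p - k))"
    by (simp add: binomial_ring)
  also have "{..p} = insert p (insert 0 {1..<p})"
    using p by auto
  finally have "(A + B) ^ p - (A ^ p + B ^ p) = (\<Sum>k\<in>{1..<p}. of_nat (p choose k) * A ^ k * B ^ (p - k))"
    using p by simp
  also have "\<dots> \<in> gmultiples p"
  proof (rule gmultiples_sum)
    fix k
    assume "k \<in> {1..<p}"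
    then obtain c where c: "p choose k = p * c"
      using dvd_choose_prime[OF _ _ _ assms, of k] by auto
    have "of_nat (p choose k) * A ^ k * B ^ (p - k)
        = of_nat p * gcomplex (int c, 0) * gcomplex (gpow x k) * gcomplex (gpow y (p - k))"
      by (simp add: A_def B_def c gcomplex_gpow gcomplex_of_int)
    also have "\<dots> \<in> gmultiples p"
      unfolding gmultiples_def by (intro gmultiples_mult[unfolded gmultiples_def] rangeI)
    finally show "of_nat (p choose k) * A ^ k * B ^ (p - k) \<in> gmultiples p" .
  qed simp
  finally show ?thesis
    by (simp add: A_def B_def)
qed

text \<open>Frobenius: raising to the p-th power acts mod p as the identity if i^p = i, as conjugation if i^p = -i.\<close>

lemma gpow_prime_cong:
  assumes "prime p" and "odd p"
  shows "gcong p (gpow z p) (if p mod 4 = 1 then z else gconj z)"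
proof -
  obtain a b where z: "z = (a, b)"
    by fastforce
  define s :: int where "s = (if p mod 4 = 1 then 1 else - 1)"
  have "gcomplex z = gcomplex (a, 0) + gcomplex (0, b)"
    by (simp add: z gcomplex_def)
  moreover have "gcomplex (a, 0) ^ p + gcomplex (0, b) ^ p = gcomplex (a ^ p, s * b ^ p)"
    using i_power_odd[OF assms(2)] by (simp add: gcomplex_def s_def power_mult_distrib)
  ultimately have "gcong p (gpow z p) (a ^ p, s * b ^ p)"
    using gcomplex_add_pow_prime[OF assms(1), of "(a, 0)" "(0, b)"]
    by (intro gcong_if_gcomplex_diff) (simp add: gcomplex_gpow)
  also have "gcong p (a ^ p, s * b ^ p) (a, s * b)"
    unfolding gcong_def using fermat_little_int[OF assms(1)] by (auto intro: cong_mult)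
  also have "(a, s * b) = (if p mod 4 = 1 then z else gconj z)"
    by (simp add: z s_def gconj_def)
  finally show ?thesis .
qed

lemma FF_odd: "odd n \<Longrightarrow> FF n = (if n mod 4 = 1 then n - 1 else n + 1)"
  unfolding FF_def by presburger

lemma gpow_FF_odd_prime:
  assumes "prime p" and "odd p" and "[gnorm z = 1] (mod int p)"
  shows "gcong p (gpow z (FF p)) (1, 0)"
proof -
  have norm: "gcong p (gnorm z, 0) (1, 0)"
    using assms(3) by (simp add: gcong_of_int_iff)
  have frob: "gcong p (gpow z p) (if p mod 4 = 1 then z else gconj z)"
    using gpow_prime_cong[OF assms(1,2)] .
  show ?thesis
  proof (cases "p mod 4 = 1")
    case True
    have "gcong p (gpow z (p - 1)) (gmult (gpow z (p - 1)) (gnorm z, 0))"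
      using gcong_gmult[OF gcong_refl gcong_sym[OF norm], of "gpow z (p - 1)"] by simp
    also have "gmult (gpow z (p - 1)) (gnorm z, 0) = gmult (gpow z p) (gconj z)"
      using gpow_add[of z "p - 1" 1] prime_ge_1_nat[OF assms(1)]
      by (simp add: gmult_assoc gmult_gconj_self)
    also have "gcong p \<dots> (gmult z (gconj z))"
      using frob True by (simp add: gcong_gmult)
    also have "gcong p \<dots> (1, 0)"
      using norm by (simp add: gmult_gconj_self)
    finally show ?thesis
      using True assms(2) by (simp add: FF_odd)
  next
    case False
    have "gcong p (gpow z (p + 1)) (gmult z (gconj z))"
      using frob False by (simp add: gcong_gmult)
    also have "gcong p \<dots> (1, 0)"
      using norm by (simp add: gmult_gconj_self)
    finally show ?thesis
      using False assms(2) by (simp add: FF_odd)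
  qed
qed

lemma FF_pos: "n > 1 \<Longrightarrow> FF n > 0"
  by (simp add: FF_def)

lemma FF_two [simp]: "FF 2 = 2"
  by (simp add: FF_def)

lemma gpow_FF_prime:
  assumes "prime p" and "[gnorm z = 1] (mod int p)"
  shows "gcong p (gpow z (FF p)) (1, 0)"
proof (cases "odd p")
  case True
  with assms show ?thesis
    by (simp add: gpow_FF_odd_prime)
next
  case False
  then have p: "p = 2"
    using assms(1) by (simp add: prime_even_imp_two)
  obtain a b where z: "z = (a, b)"
    by fastforce
  have "(a ^ 2 + b ^ 2) mod 2 = 1"
    using assms(2) by (simp add: p z gnorm_def cong_def)
  then have "odd (a ^ 2 + b ^ 2)"
    by (simp only: odd_iff_mod_2_eq_one)
  then have "odd (a ^ 2 - b ^ 2)"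
    by simp
  then have "(a ^ 2 - b ^ 2) mod 2 = 1"
    by (rule odd_iff_mod_2_eq_one[THEN iffD1])
  then have "[a ^ 2 - b ^ 2 = 1] (mod 2)"
    by (simp add: cong_def)
  moreover have "gpow z 2 = (a ^ 2 - b ^ 2, 2 * a * b)"
    by (simp add: z gmult_def power2_eq_square numeral_2_eq_2)
  ultimately show ?thesis
    by (simp add: p gcong_def cong_0_iff)
qed

section \<open>The exponent of G_n\<close>

text \<open>Writing y = 1 + d w, induction gives y^j = 1 + j d w + d^2 X_j; for j = q with q | d
  both remaining terms are multiples of q d.\<close>

lemma gpow_cong_one_lift:
  assumes y: "gcong d y (1, 0)" and "q dvd d"
  shows "gcong (q * d) (gpow y q) (1, 0)"
proof -
  define D where "D = int d"
  have "D dvd fst y - 1" and "D dvd snd y"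
    using y by (simp_all add: D_def gcong_def cong_iff_dvd_diff)
  then obtain s t where "fst y - 1 = D * s" and "snd y = D * t"
    by (elim dvdE)
  then have yst: "y = (1 + D * s, D * t)"
    by (simp add: prod_eq_iff)
  have "\<exists>X Y. gpow y j = (1 + int j * D * s + D * D * X, int j * D * t + D * D * Y)" for j
  proof (induction j)
    case 0
    show ?case by simp
  next
    case (Suc j)
    then obtain X Y where "gpow y j = (1 + int j * D * s + D * D * X, int j * D * t + D * D * Y)"
      by blast
    then have "gpow y (Suc j) = (1 + int (Suc j) * D * s + D * D * (X + int j * s^2 + D * s * X - int j * t^2 - D * t * Y),
        int (Suc j) * D * t + D * D * (Y + 2 * int j * s * t + D * s * Y + D * t * X))"
      by (simp add: yst gmult_def algebra_simps power2_eq_square)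
    then show ?case
      by blast
  qed
  then obtain X Y where XY: "gpow y q = (1 + int q * D * s + D * D * X, int q * D * t + D * D * Y)"
    by blast
  obtain r where "d = q * r"
    using assms(2) ..
  then have "int (q * d) dvd int q * D * s + D * D * X" and "int (q * d) dvd int q * D * t + D * D * Y"
    unfolding D_def by (simp_all add: algebra_simps)
  then show ?thesis
    by (simp add: XY gcong_def cong_iff_dvd_diff)
qed

lemma gpow_cong_one_prime_power:
  assumes "gcong p y (1, 0)"
  shows "gcong (p ^ Suc j) (gpow y (p ^ j)) (1, 0)"
proof (induction j)
  case 0
  show ?case using assms by simp
next
  case (Suc j)
  have "gcong (p * p ^ Suc j) (gpow (gpow y (p ^ j)) p) (1, 0)"
    by (rule gpow_cong_one_lift[OF Suc]) simp
  then show ?case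
    by (simp add: gpow_mult[symmetric] mult.commute)
qed

text \<open>The local exponent at p; note that FF 2 = 2 makes the formula uniform in p.\<close>

lemma gpow_FF_prime_power:
  assumes "prime p" and "[gnorm z = 1] (mod int p)" and "e \<ge> 1"
  shows "gcong (p ^ e) (gpow z (FF p * p ^ (e - 1))) (1, 0)"
  using gpow_cong_one_prime_power[OF gpow_FF_prime[OF assms(1,2)], of "e - 1"] assms(3)
  by (simp add: gpow_mult)

lemma dvd_if_prime_power_factors_dvd:
  fixes n :: nat and D :: int
  assumes "n > 0" and "\<And>p. prime p \<Longrightarrow> p dvd n \<Longrightarrow> int (p ^ multiplicity p n) dvd D"
  shows "int n dvd D"
proof -
  have "n dvd nat \<bar>D\<bar>"
  proof (cases "D = 0")
    case False
    show ?thesis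
    proof (rule multiplicity_le_imp_dvd)
      fix p :: nat
      assume p: "prime p"
      show "multiplicity p n \<le> multiplicity p (nat \<bar>D\<bar>)"
      proof (cases "p dvd n")
        case True
        then have "p ^ multiplicity p n dvd nat \<bar>D\<bar>"
          using assms(2)[OF p] by (simp add: dvd_nat_abs_iff)
        then show ?thesis
          using False p by (intro multiplicity_geI) (auto dest: not_prime_unit)
      qed (simp add: not_dvd_imp_multiplicity_0)
    qed (use assms(1) in simp)
  qed simp
  then show ?thesis
    by (simp add: dvd_nat_abs_iff)
qed

lemma gcong_if_prime_power_factors:
  assumes "n > 0" and "\<And>p. prime p \<Longrightarrow> p dvd n \<Longrightarrow> gcong (p ^ multiplicity p n) z w"
  shows "gcong n z w"
  using assms unfolding gcong_def cong_iff_dvd_diff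
  by (auto intro: dvd_if_prime_power_factors_dvd)

definition gmod :: "nat \<Rightarrow> gint \<Rightarrow> gint" where
  "gmod n z = (fst z mod int n, snd z mod int n)"

lemma gcong_gmod: "gcong n (gmod n z) z"
  by (simp add: gmod_def gcong_def)

definition annihilates :: "nat \<Rightarrow> nat \<Rightarrow> bool" where
  "annihilates n k \<longleftrightarrow> (\<forall>x \<in> Gn n. gcong n (gpow x k) (1, 0))"

lemma annihilatesD:
  assumes "annihilates n k" and "n > 0" and "[gnorm z = 1] (mod int n)"
  shows "gcong n (gpow z k) (1, 0)"
proof -
  have "[gnorm (gmod n z) = gnorm z] (mod int n)"
    using gcong_gnorm[OF gcong_gmod] .
  with assms(2,3) have "gmod n z \<in> Gn n"
    by (auto simp: Gn_def gmod_def intro: cong_trans)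
  then have "gcong n (gpow (gmod n z) k) (1, 0)"
    using assms(1) unfolding annihilates_def by blast
  then show ?thesis
    using gcong_gpow[OF gcong_gmod, of n z k] gcong_sym gcong_trans by blast
qed

lemma annihilates_if_local:
  assumes "n > 0" and "\<And>p. prime p \<Longrightarrow> p dvd n \<Longrightarrow> FF p * p ^ (multiplicity p n - 1) dvd k"
  shows "annihilates n k"
  unfolding annihilates_def
proof
  fix z
  assume "z \<in> Gn n"
  then have norm: "[gnorm z = 1] (mod int n)"
    by (simp add: Gn_def)
  show "gcong n (gpow z k) (1, 0)"
  proof (rule gcong_if_prime_power_factors[OF assms(1)])
    fix p
    assume p: "prime p" "p dvd n"
    have "[gnorm z = 1] (mod int p)"
      using norm p(2) cong_dvd_modulus int_dvd_int_iff by blast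
    moreover have "multiplicity p n \<ge> 1"
      using p assms(1) by (intro multiplicity_geI) (auto dest: not_prime_unit)
    ultimately show "gcong (p ^ multiplicity p n) (gpow z k) (1, 0)"
      using gpow_FF_prime_power[OF p(1)] gpow_eq_one_dvd assms(2)[OF p] by blast
  qed
qed

lemma annihilates_mod:
  assumes "annihilates n k" and "annihilates n l"
  shows "annihilates n (k mod l)"
  unfolding annihilates_def
proof
  fix x
  assume x: "x \<in> Gn n"
  then have "gcong n (gpow x l) (1, 0)"
    using assms(2) unfolding annihilates_def by blast
  have "gpow x k = gmult (gpow (gpow x l) (k div l)) (gpow x (k mod l))"
    by (simp add: gpow_add[symmetric] gpow_mult[symmetric])
  also have "gcong n \<dots> (gmult (1, 0) (gpow x (k mod l)))"
    using gcong_gmult[OF gcong_gpow[OF \<open>gcong n (gpow x l) (1, 0)\<close>] gcong_refl] by simp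
  finally have "gcong n (gpow x (k mod l)) (gpow x k)"
    by (simp add: gcong_sym)
  also have "gcong n \<dots> (1, 0)"
    using assms(1) x unfolding annihilates_def by blast
  finally show "gcong n (gpow x (k mod l)) (1, 0)" .
qed

lemma Lambda_pos_annihilates:
  assumes "n > 0"
  shows "Lambda n > 0 \<and> annihilates n (Lambda n)"
proof -
  define K where "K = (\<Prod>p\<in>prime_factors n. FF p * p ^ (multiplicity p n - 1))"
  have "K > 0"
    unfolding K_def
  proof (rule prod_pos)
    fix p
    assume "p \<in> prime_factors n"
    then have "p > 1"
      using prime_gt_1_nat by (simp add: in_prime_factors_iff)
    then show "0 < FF p * p ^ (multiplicity p n - 1)"
      using FF_pos by simp
  qed
  moreover have "annihilates n K"
  proof (rule annihilates_if_local[OF assms])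
    fix p
    assume "prime p" and "p dvd n"
    then have "p \<in> prime_factors n"
      using assms by (simp add: in_prime_factors_iff)
    then show "FF p * p ^ (multiplicity p n - 1) dvd K"
      unfolding K_def by (intro dvd_prodI) auto
  qed
  ultimately show ?thesis
    unfolding Lambda_def annihilates_def[symmetric] by (rule LeastI_ex[OF exI, OF conjI])
qed

lemma Lambda_dvd_iff:
  assumes "n > 0"
  shows "Lambda n dvd k \<longleftrightarrow> annihilates n k"
proof -
  have pos: "Lambda n > 0" and ann: "annihilates n (Lambda n)"
    using Lambda_pos_annihilates[OF assms] by auto
  show ?thesis
  proof
    assume "Lambda n dvd k"
    with ann show "annihilates n k"
      unfolding annihilates_def using gpow_eq_one_dvd by blast
  next
    assume "annihilates n k"
    then have rem: "annihilates n (k mod Lambda n)"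
      using ann by (rule annihilates_mod)
    show "Lambda n dvd k"
    proof (rule ccontr)
      assume "\<not> Lambda n dvd k"
      then have "0 < k mod Lambda n"
        by (simp add: dvd_eq_mod_eq_0)
      with rem have "Lambda n \<le> k mod Lambda n"
        unfolding Lambda_def annihilates_def[symmetric] by (intro Least_le conjI)
      with pos show False
        using mod_less_divisor[OF pos, of k] by linarith
    qed
  qed
qed

section \<open>Sufficiency of the conditions\<close>

lemma coprime_FF_odd:
  assumes "odd n"
  shows "coprime (FF n) n"
proof (cases "n mod 4 = 1")
  case True
  then have "n > 0"
    by presburger
  then have "coprime (n - 1) n"
    by (rule coprime_diff_one_left_nat)
  with True show ?thesis
    by (simp add: FF_def)
qed (simp add: FF_odd assms)

lemma annihilates_FF_if_conditions:
  assumes "n > 0"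
    and FF_dvd: "\<And>p. prime p \<Longrightarrow> p dvd n \<Longrightarrow> FF p dvd FF n"
    and "(odd n \<and> squarefree n) \<or> 4 dvd n"
  shows "annihilates n (FF n)"
proof (rule annihilates_if_local[OF assms(1)])
  fix p
  assume p: "prime p" "p dvd n"
  define e where "e = multiplicity p n"
  have "e \<ge> 1"
    unfolding e_def using p assms(1) by (intro multiplicity_geI) (auto dest: not_prime_unit)
  have "p ^ e dvd n"
    unfolding e_def by (rule multiplicity_dvd)
  show "FF p * p ^ (e - 1) dvd FF n"
    using assms(3)
  proof
    assume "odd n \<and> squarefree n"
    moreover have "n \<noteq> 0"
      using assms(1) by simp
    ultimately have "e \<le> 1"
      unfolding e_def using p(1) squarefree_factorial_semiring'' by blast
    then show ?thesis
      using FF_dvd[OF p] by simp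
  next
    assume "4 dvd n"
    then have FF_n: "FF n = n"
      unfolding FF_def by presburger
    show ?thesis
    proof (cases "p = 2")
      case True
      have "FF p * p ^ (e - 1) = p ^ e"
        using \<open>e \<ge> 1\<close> True by (cases e) simp_all
      with \<open>p ^ e dvd n\<close> FF_n show ?thesis
        by simp
    next
      case False
      then have "odd p"
        using p(1) prime_even_imp_two by blast
      have "p ^ (e - 1) dvd n"
        using \<open>p ^ e dvd n\<close> le_imp_power_dvd[of "e - 1" e p] dvd_trans by auto
      moreover have "coprime (FF p) (p ^ (e - 1))"
        using coprime_FF_odd[OF \<open>odd p\<close>] by simp
      ultimately show ?thesis
        using FF_dvd[OF p] FF_n by (simp add: divides_mult)
    qed
  qed
qed

lemma gauss_carmichael_if_annihilates:
  assumes "composite n" and "annihilates n (FF n)"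
  shows "gauss_carmichael n"
  unfolding gauss_carmichael_def gauss_fermat_psp_def
proof (intro conjI allI impI assms(1))
  fix z
  assume coprime: "coprime (int n) (gnorm z)"
  then show "coprime (int n) (gnorm z)" .
  define w where "w = gmult z (ginv n (gconj z))"
  have "[gnorm (gmult (ginv n (gconj z)) (gconj z)) = gnorm (1, 0)] (mod int n)"
    using coprime by (intro gcong_gnorm gmult_ginv) simp
  then have "[gnorm w = 1] (mod int n)"
    by (simp add: w_def gnorm_gmult mult.commute)
  moreover have "n > 0"
    using assms(1) by (simp add: composite_def)
  ultimately show "gcong n (gpow w (FF n)) (1, 0)"
    using annihilatesD[OF assms(2)] by blast
qed

section \<open>Necessity of the conditions\<close>

lemma coprime_if_cong_one:
  fixes x :: int
  assumes "[x = 1] (mod m)"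
  shows "coprime m x"
proof -
  have "coprime x m"
    using cong_imp_coprime[OF cong_sym[OF assms] coprime_1_left] .
  then show ?thesis
    by (simp add: coprime_commute)
qed

lemma gauss_carmichael_gpow_conj:
  assumes "gauss_carmichael n" and "coprime (int n) (gnorm z)"
  shows "gcong n (gpow z (FF n)) (gpow (gconj z) (FF n))"
proof -
  define v where "v = ginv n (gconj z)"
  have v: "gcong n (gmult v (gconj z)) (1, 0)"
    unfolding v_def using assms(2) by (intro gmult_ginv) simp
  have "gcong n (gpow z (FF n)) (gmult (gpow z (FF n)) (gpow (gmult v (gconj z)) (FF n)))"
    using gcong_gmult[OF gcong_refl gcong_gpow[OF v]] by (simp add: gcong_sym)
  also have "\<dots> = gmult (gpow (gmult z v) (FF n)) (gpow (gconj z) (FF n))"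
    by (simp add: gpow_gmult gmult_assoc)
  also have "gcong n \<dots> (gpow (gconj z) (FF n))"
  proof -
    have "gcong n (gpow (gmult z v) (FF n)) (1, 0)"
      using assms unfolding gauss_carmichael_def gauss_fermat_psp_def v_def by blast
    then show ?thesis
      using gcong_gmult[OF _ gcong_refl] by fastforce
  qed
  finally show ?thesis .
qed

lemma exists_gcong_coprime_gnorm:
  assumes "prime p" and "p dvd n" and "n > 0" and "\<not> int p dvd gnorm z"
  shows "\<exists>w. gcong p w z \<and> coprime (int n) (gnorm w)"
proof -
  have "n \<noteq> 0" and "\<not> is_unit p"
    using assms(1,3) not_prime_unit by auto
  then obtain r where n: "n = p ^ multiplicity p n * r" and "\<not> p dvd r"
    by (rule multiplicity_decompose')
  then have "coprime (int p) (int r)"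
    using assms(1) by (simp add: prime_imp_coprime)
  then obtain a b where a: "[a = fst z] (mod int p)" "[a = 1] (mod int r)"
    and b: "[b = snd z] (mod int p)" "[b = 0] (mod int r)"
    using binary_chinese_remainder_int by blast
  define w where "w = (a, b)"
  have "gcong p w z"
    using a b by (simp add: w_def gcong_def)
  then have "\<not> int p dvd gnorm w"
    using gcong_gnorm cong_dvd_iff assms(4) by blast
  then have "coprime (int p) (gnorm w)"
    using assms(1) by (simp add: prime_imp_coprime)
  moreover have "[gnorm w = 1] (mod int r)"
    using cong_add[OF cong_pow[OF a(2)] cong_pow[OF b(2)], of 2 2] by (simp add: w_def gnorm_def)
  then have "coprime (int r) (gnorm w)"
    by (rule coprime_if_cong_one)
  ultimately have "coprime (int n) (gnorm w)"
    by (subst n) simp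
  with \<open>gcong p w z\<close> show ?thesis
    by blast
qed

lemma gauss_carmichael_gpow_conj_mod_prime:
  assumes "gauss_carmichael n" and "prime p" and "p dvd n" and "\<not> int p dvd gnorm z"
  shows "gcong p (gpow z (FF n)) (gpow (gconj z) (FF n))"
proof -
  have "n > 0"
    using assms(1) by (simp add: gauss_carmichael_def composite_def)
  then obtain w where w: "gcong p w z" and "coprime (int n) (gnorm w)"
    using exists_gcong_coprime_gnorm[OF assms(2,3) _ assms(4)] by blast
  have "gcong p (gpow z (FF n)) (gpow w (FF n))"
    using gcong_gpow[OF gcong_sym[OF w]] .
  also have "gcong p \<dots> (gpow (gconj w) (FF n))"
    using gauss_carmichael_gpow_conj[OF assms(1) \<open>coprime (int n) (gnorm w)\<close>] assms(3)
    by (rule gcong_dvd_modulus)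
  also have "gcong p \<dots> (gpow (gconj z) (FF n))"
    using gcong_gpow[OF gcong_gconj[OF w]] .
  finally show ?thesis .
qed

lemma minus_one_square_mod_prime_iff:
  assumes "prime p" and "odd p"
  shows "(\<exists>c. [c ^ 2 = - 1] (mod int p)) \<longleftrightarrow> p mod 4 = 1"
proof -
  have "p > 2"
    using odd_prime_gt_2[OF assms] .
  obtain q where q: "p = 2 * q + 1"
    using assms(2) oddE by blast
  have not_one: "\<not> [1 = - 1] (mod int p)" "\<not> [- 1 = 1] (mod int p)"
    using odd_prime_not_dvd_two[OF assms] by (simp_all add: cong_iff_dvd_diff)
  have "\<not> [- 1 = 0] (mod int p)"
    using \<open>p > 2\<close> by (simp add: cong_0_iff)
  then have "Legendre (- 1) (int p) = (if QuadRes (int p) (- 1) then 1 else - 1)"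
    by (simp add: Legendre_def)
  moreover have "[Legendre (- 1) (int p) = (- 1) ^ q] (mod int p)"
    using euler_criterion[OF assms(1) \<open>p > 2\<close>, of "- 1"] q by simp
  ultimately have "QuadRes (int p) (- 1) \<longleftrightarrow> even q"
    using not_one by (cases "even q") (auto split: if_splits)
  moreover have "p mod 4 = 1 \<longleftrightarrow> even q"
    using q by presburger
  ultimately show ?thesis
    by (simp add: QuadRes_def)
qed

definition geval :: "int \<Rightarrow> gint \<Rightarrow> int" where
  "geval c z = fst z + snd z * c"

lemma geval_gmult:
  assumes "[c ^ 2 = - 1] (mod m)"
  shows "[geval c (gmult z w) = geval c z * geval c w] (mod m)"
proof -
  have "[geval c (gmult z w) + snd z * snd w * (c ^ 2 + 1) = geval c (gmult z w) + snd z * snd w * 0] (mod m)"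
    using assms by (intro cong_add cong_mult) (auto simp: cong_iff_dvd_diff)
  then show ?thesis
    by (simp add: geval_def gmult_def power2_eq_square algebra_simps cong_sym)
qed

lemma geval_gpow:
  assumes "[c ^ 2 = - 1] (mod m)"
  shows "[geval c (gpow z k) = geval c z ^ k] (mod m)"
proof (induction k)
  case 0
  show ?case by (simp add: geval_def)
next
  case (Suc k)
  have "[geval c (gmult z (gpow z k)) = geval c z * geval c (gpow z k)] (mod m)"
    by (rule geval_gmult[OF assms])
  also have "[geval c z * geval c (gpow z k) = geval c z * geval c z ^ k] (mod m)"
    using Suc by (rule cong_scalar_left)
  finally show ?case
    by simp
qed

lemma geval_gcong: "gcong m z w \<Longrightarrow> [geval c z = geval c w] (mod int m)"
  unfolding gcong_def geval_def by (simp add: cong_add cong_mult)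

text \<open>The witness turns the hypothesis z^k \<equiv> (gconj z)^k into (2G)^k \<equiv> 2^k.\<close>

lemma exists_geval_witness:
  assumes "prime p" and "odd p" and c: "[c ^ 2 = - 1] (mod int p)" and "\<not> int p dvd G"
  shows "\<exists>z. \<not> int p dvd gnorm z \<and> [geval c z = 2 * G] (mod int p) \<and> [geval c (gconj z) = 2] (mod int p)"
proof -
  define z where "z = (1 + G, (1 - G) * c)"
  have z: "[geval c z = 2 * G] (mod int p)"
  proof -
    have "geval c z = 1 + G + (1 - G) * c ^ 2"
      by (simp add: geval_def z_def power2_eq_square)
    also have "[\<dots> = 1 + G + (1 - G) * (- 1)] (mod int p)"
      using c by (intro cong_add cong_scalar_left) auto
    finally show ?thesis
      by simp
  qed
  moreover have conj_z: "[geval c (gconj z) = 2] (mod int p)"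
  proof -
    have "geval c (gconj z) = 1 + G - (1 - G) * c ^ 2"
      by (simp add: geval_def z_def gconj_def power2_eq_square)
    also have "[\<dots> = 1 + G - (1 - G) * (- 1)] (mod int p)"
      using c by (intro cong_diff cong_scalar_left) auto
    finally show ?thesis
      by simp
  qed
  moreover have "\<not> int p dvd gnorm z"
  proof -
    have "[gnorm z = geval c z * geval c (gconj z)] (mod int p)"
      using geval_gmult[OF c, of z "gconj z"] by (simp add: gmult_gconj_self geval_def)
    also have "[geval c z * geval c (gconj z) = 2 * G * 2] (mod int p)"
      using z conj_z by (rule cong_mult)
    finally have norm_z: "[gnorm z = 2 * G * 2] (mod int p)" .
    have prime_p: "prime (int p)"
      using assms(1) by simp
    show ?thesis
      unfolding cong_dvd_iff[OF norm_z] prime_dvd_mult_iff[OF prime_p]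
      using assms(4) odd_prime_not_dvd_two[OF assms(1,2)] by blast
  qed
  ultimately show ?thesis
    by blast
qed

lemma exists_primitive_root_prime:
  assumes "prime p"
  shows "\<exists>g. \<not> p dvd g \<and> ord p g = p - 1"
proof -
  obtain g where g: "g \<in> totatives p" and "ord p g = Carmichael p"
    using Carmichael_root_exists[OF prime_gt_0_nat[OF assms]] .
  then have "ord p g = p - 1"
    using Carmichael_prime[OF assms] by simp
  moreover have "\<not> p dvd g"
  proof
    assume "p dvd g"
    then have "is_unit p"
      using g by (intro coprime_common_divisor[of g p p]) (auto simp: in_totatives_iff)
    then show False
      using assms not_prime_unit by blast
  qed
  ultimately show ?thesis
    by blast
qed

lemma prime_minus_one_dvd_if_gpow_conj:
  assumes "prime p" and "p mod 4 = 1"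
    and conj: "\<And>z. \<not> int p dvd gnorm z \<Longrightarrow> gcong p (gpow z k) (gpow (gconj z) k)"
  shows "p - 1 dvd k"
proof -
  have "odd p"
    using assms(2) by presburger
  then obtain c where c: "[c ^ 2 = - 1] (mod int p)"
    using minus_one_square_mod_prime_iff[OF assms(1)] assms(2) by blast
  obtain g where "\<not> p dvd g" and ord_g: "ord p g = p - 1"
    using exists_primitive_root_prime[OF assms(1)] by blast
  define G where "G = int g"
  have "\<not> int p dvd G"
    using \<open>\<not> p dvd g\<close> by (simp add: G_def)
  then obtain z where z: "\<not> int p dvd gnorm z" "[geval c z = 2 * G] (mod int p)"
    "[geval c (gconj z) = 2] (mod int p)"
    using exists_geval_witness[OF assms(1) \<open>odd p\<close> c] by blast
  have "[(2 * G) ^ k = geval c z ^ k] (mod int p)"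
    using cong_pow[OF z(2)] by (rule cong_sym)
  also have "[geval c z ^ k = geval c (gpow z k)] (mod int p)"
    using geval_gpow[OF c] by (rule cong_sym)
  also have "[geval c (gpow z k) = geval c (gpow (gconj z) k)] (mod int p)"
    using conj[OF z(1)] by (rule geval_gcong)
  also have "[geval c (gpow (gconj z) k) = geval c (gconj z) ^ k] (mod int p)"
    using geval_gpow[OF c] .
  also have "[geval c (gconj z) ^ k = 2 ^ k * 1] (mod int p)"
    using cong_pow[OF z(3)] by simp
  finally have "[2 ^ k * G ^ k = 2 ^ k * 1] (mod int p)"
    by (simp add: power_mult_distrib)
  moreover have "coprime (2 ^ k) (int p)"
    using prime_imp_coprime[of "int p" 2] assms(1) odd_prime_not_dvd_two[OF assms(1) \<open>odd p\<close>]
    by (simp add: coprime_commute)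
  ultimately have "[G ^ k = 1] (mod int p)"
    using cong_mult_lcancel by blast
  then have "[int (g ^ k) = int 1] (mod int p)"
    by (simp add: G_def)
  then have "[g ^ k = 1] (mod p)"
    by (simp only: cong_int_iff)
  then show ?thesis
    using ord_g ord_divides by simp
qed

lemma prime_dvd_gnorm_3mod4:
  assumes "prime p" and "p mod 4 = 3" and "int p dvd gnorm z"
  shows "int p dvd fst z \<and> int p dvd snd z"
proof -
  obtain a b where z: "z = (a, b)"
    by fastforce
  have prime_p: "prime (int p)"
    using assms(1) by simp
  have sum: "int p dvd a ^ 2 + b ^ 2"
    using assms(3) by (simp add: z gnorm_def)
  have "int p dvd a"
  proof (rule ccontr)
    assume "\<not> int p dvd a"
    then have "coprime a (int p)"
      using prime_imp_coprime[OF prime_p] by (simp add: coprime_commute)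
    then obtain a' where a': "[a * a' = 1] (mod int p)"
      using cong_solve_coprime_int by blast
    have "[(b * a') ^ 2 + 1 = (b * a') ^ 2 + (a * a') ^ 2] (mod int p)"
      using cong_pow[OF cong_sym[OF a'], of 2] by (intro cong_add) simp_all
    also have "(b * a') ^ 2 + (a * a') ^ 2 = (a ^ 2 + b ^ 2) * a' ^ 2"
      by (simp add: power_mult_distrib algebra_simps)
    also have "[(a ^ 2 + b ^ 2) * a' ^ 2 = 0 * a' ^ 2] (mod int p)"
      using sum by (intro cong_scalar_right) (simp add: cong_0_iff)
    finally have "[(b * a') ^ 2 = - 1] (mod int p)"
      by (simp add: cong_iff_dvd_diff algebra_simps)
    moreover have "odd p"
      using assms(2) by presburger
    ultimately show False
      using minus_one_square_mod_prime_iff[OF assms(1)] assms(2) by auto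
  qed
  moreover have "int p dvd b"
  proof -
    have "int p dvd a ^ 2"
      using \<open>int p dvd a\<close> by (simp add: power2_eq_square)
    then have "int p dvd b ^ 2"
      using sum by (simp add: dvd_add_right_iff)
    then show ?thesis
      using prime_dvd_power[OF prime_p] by blast
  qed
  ultimately show ?thesis
    by (simp add: z)
qed

definition gadd :: "gint \<Rightarrow> gint \<Rightarrow> gint" where
  "gadd z w = (fst z + fst w, snd z + snd w)"

lemma gcong_gadd: "gcong n z w \<Longrightarrow> gcong n z' w' \<Longrightarrow> gcong n (gadd z z') (gadd w w')"
  unfolding gcong_def gadd_def by (auto intro: cong_add)

text \<open>Z[i]/pZ[i] on the residues {0..<p}^2; for p \<equiv> 3 (mod 4) it is the field with p^2 elements.\<close>

definition gauss_residue_ring :: "nat \<Rightarrow> gint ring" where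
  "gauss_residue_ring n =
     \<lparr>carrier = {0..<int n} \<times> {0..<int n}, mult = (\<lambda>z w. gmod n (gmult z w)),
      one = (1, 0), zero = (0, 0), add = (\<lambda>z w. gmod n (gadd z w))\<rparr>"

lemma gauss_residue_ring_simps:
  "carrier (gauss_residue_ring n) = {0..<int n} \<times> {0..<int n}"
  "mult (gauss_residue_ring n) z w = gmod n (gmult z w)"
  "add (gauss_residue_ring n) z w = gmod n (gadd z w)"
  "one (gauss_residue_ring n) = (1, 0)"
  "zero (gauss_residue_ring n) = (0, 0)"
  by (simp_all add: gauss_residue_ring_def)

lemma gmod_in_carrier: "n > 0 \<Longrightarrow> gmod n z \<in> carrier (gauss_residue_ring n)"
  by (simp add: gmod_def gauss_residue_ring_simps)

lemma gmod_carrier: "z \<in> carrier (gauss_residue_ring n) \<Longrightarrow> gmod n z = z"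
  by (auto simp: gmod_def gauss_residue_ring_simps prod_eq_iff)

lemma gmod_eq_iff: "gmod n z = gmod n w \<longleftrightarrow> gcong n z w"
  by (simp add: gmod_def gcong_def cong_def prod_eq_iff)

lemma gmod_gmult: "gmod n (gmult (gmod n z) w) = gmod n (gmult z w)"
  "gmod n (gmult z (gmod n w)) = gmod n (gmult z w)"
  by (simp_all add: gmod_eq_iff gcong_gmult gcong_gmod)

lemma gmod_gadd: "gmod n (gadd (gmod n z) w) = gmod n (gadd z w)"
  "gmod n (gadd z (gmod n w)) = gmod n (gadd z w)"
  by (simp_all add: gmod_eq_iff gcong_gadd gcong_gmod)

lemma gauss_residue_ring_abelian_group:
  assumes "n > 0"
  shows "abelian_group (gauss_residue_ring n)"
proof (rule abelian_groupI, unfold gauss_residue_ring_simps)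
  fix z w u
  show "gmod n (gadd z w) \<in> {0..<int n} \<times> {0..<int n}"
    using gmod_in_carrier[OF assms] by (simp add: gauss_residue_ring_simps)
  show "gmod n (gadd (gmod n (gadd z w)) u) = gmod n (gadd z (gmod n (gadd w u)))"
    by (simp add: gmod_gadd) (simp add: gadd_def add.assoc)
  show "gmod n (gadd z w) = gmod n (gadd w z)"
    by (simp add: gadd_def add.commute)
next
  show "(0, 0) \<in> {0..<int n} \<times> {0..<int n}"
    using assms by simp
next
  fix z
  assume "z \<in> {0..<int n} \<times> {0..<int n}"
  then show "gmod n (gadd (0, 0) z) = z"
    using gmod_carrier[of z n] by (simp add: gadd_def gauss_residue_ring_simps)
  have "gmod n (gadd (gmod n (- fst z, - snd z)) z) = (0, 0)"
    by (simp add: gmod_gadd) (simp add: gmod_def gadd_def)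
  moreover have "gmod n (- fst z, - snd z) \<in> {0..<int n} \<times> {0..<int n}"
    using gmod_in_carrier[OF assms] by (simp add: gauss_residue_ring_simps)
  ultimately show "\<exists>y\<in>{0..<int n} \<times> {0..<int n}. gmod n (gadd y z) = (0, 0)"
    by (intro bexI)
qed

lemma gauss_residue_ring_comm_monoid:
  assumes "n > 1"
  shows "comm_monoid (gauss_residue_ring n)"
proof (rule comm_monoidI, unfold gauss_residue_ring_simps)
  fix z w u
  show "gmod n (gmult z w) \<in> {0..<int n} \<times> {0..<int n}"
    using gmod_in_carrier[of n] assms by (simp add: gauss_residue_ring_simps)
  show "gmod n (gmult (gmod n (gmult z w)) u) = gmod n (gmult z (gmod n (gmult w u)))"
    by (simp add: gmod_gmult gmult_assoc)
  show "gmod n (gmult z w) = gmod n (gmult w z)"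
    by (simp add: gmult_commute)
next
  show "(1, 0) \<in> {0..<int n} \<times> {0..<int n}"
    using assms by simp
next
  fix z
  assume "z \<in> {0..<int n} \<times> {0..<int n}"
  then show "gmod n (gmult (1, 0) z) = z"
    using gmod_carrier[of z n] by (simp add: gauss_residue_ring_simps)
qed

lemma gauss_residue_ring_cring:
  assumes "n > 1"
  shows "cring (gauss_residue_ring n)"
proof (rule cringI)
  show "abelian_group (gauss_residue_ring n)"
    using assms by (simp add: gauss_residue_ring_abelian_group)
  show "comm_monoid (gauss_residue_ring n)"
    using assms by (rule gauss_residue_ring_comm_monoid)
next
  fix z w u
  show "mult (gauss_residue_ring n) (add (gauss_residue_ring n) z w) u
      = add (gauss_residue_ring n) (mult (gauss_residue_ring n) z u) (mult (gauss_residue_ring n) w u)"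
    unfolding gauss_residue_ring_simps
    by (simp add: gmod_gmult gmod_gadd) (simp add: gmult_def gadd_def algebra_simps)
qed

lemma not_dvd_gnorm_gauss_residue:
  assumes "prime p" and "p mod 4 = 3"
    and "z \<in> carrier (gauss_residue_ring p)" and "z \<noteq> (0, 0)"
  shows "\<not> int p dvd gnorm z"
proof
  assume "int p dvd gnorm z"
  then have "gmod p z = (0, 0)"
    using prime_dvd_gnorm_3mod4[OF assms(1,2)] by (simp add: gmod_def prod_eq_iff)
  with assms(3,4) show False
    by (simp add: gmod_carrier)
qed

lemma gauss_residue_ring_field:
  assumes "prime p" and "p mod 4 = 3"
  shows "field (gauss_residue_ring p)"
proof -
  have "p > 1"
    using prime_gt_1_nat[OF assms(1)] .
  interpret R: cring "gauss_residue_ring p"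
    using gauss_residue_ring_cring[OF \<open>p > 1\<close>] .
  show ?thesis
  proof (rule R.cring_fieldI2)
    show "\<zero>\<^bsub>gauss_residue_ring p\<^esub> \<noteq> \<one>\<^bsub>gauss_residue_ring p\<^esub>"
      by (simp add: gauss_residue_ring_simps)
  next
    fix z
    assume z: "z \<in> carrier (gauss_residue_ring p)" "z \<noteq> \<zero>\<^bsub>gauss_residue_ring p\<^esub>"
    then have "coprime (int p) (gnorm z)"
      using not_dvd_gnorm_gauss_residue[OF assms] assms(1)
      by (simp add: prime_imp_coprime gauss_residue_ring_simps)
    then have "gmod p (gmult z (ginv p z)) = gmod p (1, 0)"
      using gmult_ginv[of p z] by (simp add: gmod_eq_iff gmult_commute)
    moreover have "gmod p (1, 0) = (1, 0)"
      using \<open>p > 1\<close> by (simp add: gmod_def)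
    ultimately have "z \<otimes>\<^bsub>gauss_residue_ring p\<^esub> gmod p (ginv p z) = \<one>\<^bsub>gauss_residue_ring p\<^esub>"
      by (simp add: gauss_residue_ring_simps gmod_gmult)
    moreover have "gmod p (ginv p z) \<in> carrier (gauss_residue_ring p)"
      using \<open>p > 1\<close> by (simp add: gmod_in_carrier)
    ultimately show "\<exists>y\<in>carrier (gauss_residue_ring p). z \<otimes>\<^bsub>gauss_residue_ring p\<^esub> y = \<one>\<^bsub>gauss_residue_ring p\<^esub>"
      by blast
  qed
qed

lemma gauss_residue_ring_pow:
  assumes "n > 1" and "z \<in> carrier (gauss_residue_ring n)"
  shows "z [^]\<^bsub>gauss_residue_ring n\<^esub> (k :: nat) = gmod n (gpow z k)"
proof (induction k)
  case 0
  show ?case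
    using assms(1) by (simp add: gauss_residue_ring_simps gmod_def)
next
  case (Suc k)
  then show ?case
    by (simp add: gauss_residue_ring_simps gmod_gmult gmult_commute)
qed

lemma exists_gpow_order_3mod4:
  assumes "prime p" and "p mod 4 = 3"
  shows "\<exists>a. \<not> int p dvd gnorm a \<and> (\<forall>k. gcong p (gpow a k) (1, 0) \<longrightarrow> p * p - 1 dvd k)"
proof -
  define R where "R = gauss_residue_ring p"
  have "p > 1"
    using prime_gt_1_nat[OF assms(1)] .
  interpret R: field R
    unfolding R_def using gauss_residue_ring_field[OF assms] .
  interpret G: group "mult_of R"
    by (rule R.field_mult_group)
  have fin: "finite (carrier R)"
    by (simp add: R_def gauss_residue_ring_simps)
  obtain a where a: "a \<in> carrier (mult_of R)"
    and gen: "carrier (mult_of R) = {a [^]\<^bsub>R\<^esub> i | i :: nat. i \<in> UNIV}"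
    using R.finite_field_mult_group_has_gen[OF fin] by blast
  have "G.ord a = card (carrier (mult_of R))"
    using G.generate_pow_card[OF a] G.generate_pow_on_finite_carrier[OF _ a] fin gen
    by (simp add: nat_pow_mult_of)
  also have "\<dots> = card (carrier R - {(0, 0)})"
    by (simp add: R_def gauss_residue_ring_simps)
  also have "\<dots> = p * p - 1"
    using \<open>p > 1\<close> by (simp add: R_def gauss_residue_ring_simps card_cartesian_product)
  finally have ord_a: "G.ord a = p * p - 1" .
  have a_R: "a \<in> carrier R" and "a \<noteq> (0, 0)"
    using a by (auto simp: R_def gauss_residue_ring_simps)
  have "\<not> int p dvd gnorm a"
    using not_dvd_gnorm_gauss_residue[OF assms] a_R \<open>a \<noteq> (0, 0)\<close> by (simp add: R_def)
  moreover have "p * p - 1 dvd k" if "gcong p (gpow a k) (1, 0)" for k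
  proof -
    have "gmod p (gpow a k) = (1, 0)"
      using that \<open>p > 1\<close> by (simp add: gmod_eq_iff[symmetric] gmod_def)
    then have "a [^]\<^bsub>mult_of R\<^esub> k = \<one>\<^bsub>mult_of R\<^esub>"
      using gauss_residue_ring_pow[OF \<open>p > 1\<close> a_R[unfolded R_def]]
      by (simp add: nat_pow_mult_of R_def gauss_residue_ring_simps)
    then show ?thesis
      using G.pow_eq_id[OF a] ord_a by simp
  qed
  ultimately show ?thesis
    by blast
qed

lemma prime_plus_one_dvd_if_gpow_conj:
  assumes "prime p" and "p mod 4 = 3"
    and conj: "\<And>z. \<not> int p dvd gnorm z \<Longrightarrow> gcong p (gpow z k) (gpow (gconj z) k)"
  shows "p + 1 dvd k"
proof -
  obtain a where a: "\<not> int p dvd gnorm a"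
    and ord: "\<And>k. gcong p (gpow a k) (1, 0) \<Longrightarrow> p * p - 1 dvd k"
    using exists_gpow_order_3mod4[OF assms(1,2)] by blast
  obtain q where q: "p = Suc q"
    using prime_gt_0_nat[OF assms(1)] gr0_implies_Suc by blast
  have "p \<noteq> 2"
    using assms(2) by auto
  then have "odd p"
    using assms(1) prime_even_imp_two by blast
  have "gmult (gpow a k) (gpow a (q * k)) = gpow a (p * k)"
    by (simp only: gpow_add[symmetric]) (simp add: q)
  also have "\<dots> = gpow (gpow a p) k"
    by (rule gpow_mult)
  also have "gcong p \<dots> (gpow (gconj a) k)"
    using gcong_gpow[OF gpow_prime_cong[OF assms(1) \<open>odd p\<close>, of a]] assms(2) by simp
  also have "gcong p \<dots> (gmult (gpow a k) (1, 0))"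
    using conj[OF a] by (simp add: gcong_sym)
  finally have "gcong p (gmult (gpow a k) (gpow a (q * k))) (gmult (gpow a k) (1, 0))" .
  moreover have "coprime (int p) (gnorm (gpow a k))"
    using a assms(1) by (simp add: gnorm_gpow prime_imp_coprime)
  ultimately have "gcong p (gpow a (q * k)) (1, 0)"
    by (rule gcong_cancel_left[rotated])
  then have "p * p - 1 dvd q * k"
    by (rule ord)
  moreover have "p * p - 1 = q * (p + 1)"
    by (simp add: q)
  ultimately have "q * (p + 1) dvd q * k"
    by simp
  moreover have "q \<noteq> 0"
    using prime_gt_1_nat[OF assms(1)] q by simp
  ultimately show ?thesis
    using dvd_times_left_cancel_iff[of q "p + 1" k] by blast
qed

lemma FF_dvd_if_gpow_conj:
  assumes "prime p" and "odd p"
    and "\<And>z. \<not> int p dvd gnorm z \<Longrightarrow> gcong p (gpow z k) (gpow (gconj z) k)"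
  shows "FF p dvd k"
proof (cases "p mod 4 = 1")
  case True
  then show ?thesis
    using prime_minus_one_dvd_if_gpow_conj[OF assms(1) True assms(3)] by (simp add: FF_def)
next
  case False
  with assms(2) have "p mod 4 = 3"
    by presburger
  then show ?thesis
    using prime_plus_one_dvd_if_gpow_conj[OF assms(1) _ assms(3)] by (simp add: FF_def)
qed

lemma gpow_nilpotent:
  assumes "int n dvd m * m"
  shows "gcong n (gpow (1, m) k) (1, int k * m)"
proof (induction k)
  case 0
  show ?case by simp
next
  case (Suc k)
  have "gcong n (gpow (1, m) (Suc k)) (gmult (1, m) (1, int k * m))"
    using gcong_gmult[OF gcong_refl Suc] by simp
  also have "gmult (1, m) (1, int k * m) = (1 - int k * (m * m), int (Suc k) * m)"
    by (simp add: gmult_def algebra_simps)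
  also have "gcong n \<dots> (1, int (Suc k) * m)"
    using assms by (simp add: gcong_def cong_iff_dvd_diff)
  finally show ?case .
qed

lemma gauss_carmichael_nilpotent_dvd:
  assumes "gauss_carmichael n" and nm: "int n dvd int m * int m"
  shows "n dvd 2 * FF n * m"
proof -
  have "[gnorm (1, int m) = 1] (mod int n)"
    using nm by (simp add: gnorm_def power2_eq_square cong_iff_dvd_diff)
  then have "coprime (int n) (gnorm (1, int m))"
    by (rule coprime_if_cong_one)
  define F where "F = FF n"
  have "gcong n (1, int F * int m) (gpow (1, int m) F)"
    using gpow_nilpotent[OF nm] by (rule gcong_sym)
  also have "gcong n \<dots> (gpow (1, - int m) F)"
    using gauss_carmichael_gpow_conj[OF assms(1) \<open>coprime (int n) (gnorm (1, int m))\<close>]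
    by (simp add: F_def gconj_def)
  also have "gcong n \<dots> (1, int F * (- int m))"
    using nm by (intro gpow_nilpotent) simp
  finally have "[int F * int m = int F * (- int m)] (mod int n)"
    by (simp add: gcong_def)
  moreover have "int F * int m - int F * (- int m) = int (2 * F * m)"
    by simp
  ultimately have "int n dvd int (2 * F * m)"
    by (simp only: cong_iff_dvd_diff)
  then show ?thesis
    by (simp only: of_nat_dvd_iff F_def)
qed

text \<open>If p^2 divides n, then 1 + (n/p) i is a unit of norm 1 mod n on which conjugation acts nontrivially.\<close>

lemma squarefree_if_gauss_carmichael_odd:
  assumes "gauss_carmichael n" and "odd n"
  shows "squarefree n"
proof (rule ccontr)
  assume "\<not> squarefree n"
  moreover have "n \<noteq> 0"
    using odd_pos[OF assms(2)] by simp
  ultimately obtain p where p: "prime p" "p ^ 2 dvd n"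
    using squarefree_factorial_semiring by blast
  from p(2) obtain t where t: "n = p ^ 2 * t" ..
  define m where "m = p * t"
  have n: "n = p * m"
    by (simp add: t m_def power2_eq_square)
  have "int n dvd int m * int m"
    by (rule dvdI[of _ _ "int t"]) (simp add: n m_def)
  then have "p * m dvd (2 * FF n) * m"
    using gauss_carmichael_nilpotent_dvd[OF assms(1)] by (simp add: n)
  then have "p dvd 2 * FF n"
    using \<open>n \<noteq> 0\<close> n by simp
  moreover have "\<not> p dvd 2"
  proof -
    have "odd p"
      using assms(2) n by simp
    then show ?thesis
      using odd_prime_gt_2[OF p(1)] by (auto dest: dvd_imp_le)
  qed
  ultimately have "p dvd FF n"
    using prime_dvd_mult_iff[OF p(1)] by blast
  with coprime_FF_odd[OF assms(2)] have "is_unit p"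
    by (rule coprime_common_divisor) (simp add: n)
  then show False
    using p(1) not_prime_unit by blast
qed

lemma four_dvd_FF_odd: "odd n \<Longrightarrow> 4 dvd FF n"
  unfolding FF_def by presburger

lemma FF_even: "even n \<Longrightarrow> FF n = n"
  unfolding FF_def by presburger

lemma even_shape_if_FF_prime_divisors_dvd:
  assumes "composite n" and "even n" and FF_dvd: "\<And>p. prime p \<Longrightarrow> p dvd n \<Longrightarrow> FF p dvd n"
  shows "4 dvd n \<and> (n div 4 \<in> {2, 3, 5} \<or> \<not> prime (n div 4))"
proof
  show "4 dvd n"
  proof (rule ccontr)
    assume "\<not> 4 dvd n"
    with assms(2) have n: "n = 2 * (n div 2)" and "odd (n div 2)"
      by presburger+
    moreover have "n div 2 \<noteq> 1"
      using assms(1) n by (auto simp: composite_def)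
    ultimately obtain q where q: "prime q" "q dvd n div 2"
      using prime_factor_nat by blast
    then have "odd q" and "q dvd n"
      using \<open>odd (n div 2)\<close> n by (auto dest: dvd_trans)
    then have "4 dvd n"
      using four_dvd_FF_odd FF_dvd[OF q(1)] dvd_trans by blast
    with \<open>\<not> 4 dvd n\<close> show False ..
  qed
  show "n div 4 \<in> {2, 3, 5} \<or> \<not> prime (n div 4)"
  proof (rule ccontr)
    define q where "q = n div 4"
    assume "\<not> (n div 4 \<in> {2, 3, 5} \<or> \<not> prime (n div 4))"
    then have q: "prime q" "q \<notin> {2, 3, 5}"
      by (simp_all add: q_def)
    then have "odd q"
      using prime_even_imp_two by auto
    have "n = 4 * q"
      using \<open>4 dvd n\<close> by (simp add: q_def)
    then have "FF q dvd 4 * q"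
      using FF_dvd[OF q(1)] by simp
    then have "FF q dvd 4"
      using coprime_FF_odd[OF \<open>odd q\<close>] by (simp add: coprime_dvd_mult_left_iff)
    then have "FF q \<le> 4"
      by (rule dvd_imp_le) simp
    moreover have "q - 1 \<le> FF q"
      by (auto simp: FF_def)
    ultimately have "q \<le> 5"
      by linarith
    moreover have "q \<noteq> 4"
      using \<open>odd q\<close> by auto
    ultimately show False
      using q(2) prime_ge_2_nat[OF q(1)] by (auto simp: le_Suc_eq numeral_eq_Suc)
  qed
qed

lemma conditions_if_gauss_carmichael:
  assumes "gauss_carmichael n"
  shows "(\<forall>p. prime p \<and> p dvd n \<longrightarrow> FF p dvd FF n) \<and>
         ((odd n \<and> squarefree n) \<or> (4 dvd n \<and> (n div 4 \<in> {2, 3, 5} \<or> \<not> prime (n div 4))))"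
proof -
  have FF_dvd: "FF p dvd FF n" if p: "prime p" "p dvd n" for p
  proof (cases "odd p")
    case True
    then show ?thesis
      using gauss_carmichael_gpow_conj_mod_prime[OF assms p] by (rule FF_dvd_if_gpow_conj[OF p(1)])
  next
    case False
    then have "p = 2"
      using p(1) by (simp add: prime_even_imp_two)
    with p show ?thesis
      by (simp add: FF_even)
  qed
  show ?thesis
  proof (cases "odd n")
    case True
    then show ?thesis
      using FF_dvd squarefree_if_gauss_carmichael_odd[OF assms] by blast
  next
    case False
    then show ?thesis
      using FF_dvd even_shape_if_FF_prime_divisors_dvd[of n] assms
      by (auto simp: FF_even gauss_carmichael_def)
  qed
qed

theorem mainTheorem10:
  fixes n :: nat
  assumes "composite n"
  shows "(gauss_carmichael n \<longleftrightarrow> Lambda n dvd FF n) \<and>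
         (Lambda n dvd FF n \<longleftrightarrow>
            ((\<forall>p. prime p \<and> p dvd n \<longrightarrow> FF p dvd FF n) \<and>
             ((odd n \<and> squarefree n) \<or>
              (4 dvd n \<and> (n div 4 \<in> {2, 3, 5} \<or> \<not> prime (n div 4))))))"
proof -
  have "n > 0"
    using assms by (simp add: composite_def)
  have ii_i: "Lambda n dvd FF n \<Longrightarrow> gauss_carmichael n"
    using gauss_carmichael_if_annihilates[OF assms] Lambda_dvd_iff[OF \<open>n > 0\<close>] by blast
  have iii_ii: "Lambda n dvd FF n"
    if "\<forall>p. prime p \<and> p dvd n \<longrightarrow> FF p dvd FF n" and "(odd n \<and> squarefree n) \<or> 4 dvd n"
    using annihilates_FF_if_conditions[OF \<open>n > 0\<close>] that Lambda_dvd_iff[OF \<open>n > 0\<close>] by blast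
  show ?thesis
    using conditions_if_gauss_carmichael ii_i iii_ii by blast
qed

end
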